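(* Let $K$ be a field, $S=K[x_1,\dots,x_n]$, $A\subseteq\{1,\dots,n\}$ and $f=\prod_{j\in A}x_j$. Let $J\subset I\subset S$ be monomial ideals and let $$\mathcal D:\ I/J=\bigoplus_{i=1}^r u_iK[Z_i]$$ be a Stanley decomposition of $I/J$ (so $u_i$ are monomials and $Z_i\subseteq\{x_1,\dots,x_n\}$). Put $C=\{i:\ x_j\in Z_i \text{ for all } j\in A\}$, and for $L\subseteq A$ put $f_L=\prod_{l\in L}x_l$ and $$Z_i^L=\{x_l^{-1}:\ l\in L,\ x_l\in Z_i\}\cup\{x_l:\ l\notin L,\ x_l\in Z_i\}.$$ Then $$\mathcal D_f:\ (I/J)_f=\bigoplus_{i\in C}\Big(\bigoplus_{L\subseteq A}u_if_L^{-1}K[Z_i^L]\Big)$$ is a Stanley decomposition of $(I/J)_f=I_f/J_f$. In particular, $\operatorname{sdepth} I/J\le \operatorname{sdepth}(I/J)_f$.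
   Context: $S_f$ denotes the localization $K[x_1,\dots,x_n,x_j^{-1}: j\in A]$. Its monomials are $x_1^{a_1}\cdots x_n^{a_n}$ with $a_j\in\mathbb Z$ for $j\in A$ and $a_j\in\mathbb N$ for $j\notin A$; they form a $K$-basis of $S_f$. A monomial ideal of $S_f$ is an ideal generated by monomials. For monomial ideals $J\subset I\subset S_f$, the residue classes of the monomials in $I\setminus J$ form a $K$-basis of $I/J$, and these classes are identified with the monomials in $I\setminus J$. For a monomial $u\in I\setminus J$ and a set $Z\subseteq\{x_1,\dots,x_n\}\cup\{x_j^{-1}: j\in A\}$ with $\{x_j,x_j^{-1}\}\not\subseteq Z$ for all $j\in A$, $uK[Z]$ denotes the $K$-subspace of $I/J$ spanned by the monomials $uw$, $w$ a monomial in the elements of $Z$; it is called a Stanley space of $I/J$ if it is a free $K[Z]$-submodule of $I/J$ (i.e. $uw\in I\setminus J$ for all such $w$). Its dimension is $|Z|$. A Stanley decomposition of $I/J$ is a decomposition of $I/J$ as a finite direct sum (of $K$-vector spaces) of Stanley spaces $\mathcal D: I/J=\bigoplus_{i=1}^r u_iK[Z_i]$; $\operatorname{sdepth}\mathcal D=\min_i |Z_i|$ and $\operatorname{sdepth}(I/J)$ is the maximum of $\operatorname{sdepth}\mathcal D$ over all Stanley decompositions $\mathcal D$ of $I/J$. For $A=\emptyset$ this is the usual notion for $S$. For $J\subset I\subset S$, $(I/J)_f=I_f/J_f$ with $I_f=IS_f$, $J_f=JS_f$ monomial ideals of $S_f$. *)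

theory Defs
  imports Main "HOL-Library.Extended_Nat"
begin

text \<open>Monomials of S_f = K[x_0,...,x_{n-1}, x_j^{-1} : j in A] are identified with their
  exponent vectors; variables are indexed by 0..n-1. Exponents are integers, zero outside {..<n}
  and nonnegative outside A. For A = {} these are the monomials of S.\<close>

type_synonym mon = "nat \<Rightarrow> int"

definition monoms :: "nat \<Rightarrow> nat set \<Rightarrow> mon set" where
  "monoms n A = {a. (\<forall>j. n \<le> j \<longrightarrow> a j = 0) \<and> (\<forall>j. j \<notin> A \<longrightarrow> 0 \<le> a j)}"

text \<open>A monomial ideal of S_f, given by the set of monomials it contains.\<close>
definition mono_ideal :: "nat \<Rightarrow> nat set \<Rightarrow> mon set \<Rightarrow> bool" where
  "mono_ideal n A I \<longleftrightarrow> I \<subseteq> monoms n A \<and> (\<forall>u\<in>I. \<forall>w\<in>monoms n A. (\<lambda>k. u k + w k) \<in> I)"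

text \<open>The monomials of the extension I S_f of a monomial ideal I of S.\<close>
definition loc :: "nat \<Rightarrow> nat set \<Rightarrow> mon set \<Rightarrow> mon set" where
  "loc n A I = {v. \<exists>u\<in>I. \<exists>w\<in>monoms n A. v = (\<lambda>k. u k + w k)}"

text \<open>Generators: (j, True) stands for x_j, (j, False) for x_j^{-1}.\<close>
definition valid_vars :: "nat \<Rightarrow> nat set \<Rightarrow> (nat \<times> bool) set \<Rightarrow> bool" where
  "valid_vars n A Z \<longleftrightarrow> Z \<subseteq> ({..<n} \<times> {True}) \<union> (A \<times> {False})
     \<and> (\<forall>j. \<not> ((j, True) \<in> Z \<and> (j, False) \<in> Z))"

definition mono_span :: "(nat \<times> bool) set \<Rightarrow> mon set" where
  "mono_span Z = {w. \<exists>c :: nat \<times> bool \<Rightarrow> nat. w = (\<lambda>k.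
      (if (k, True) \<in> Z then int (c (k, True)) else 0)
    - (if (k, False) \<in> Z then int (c (k, False)) else 0))}"

definition sspace :: "mon \<Rightarrow> (nat \<times> bool) set \<Rightarrow> mon set" where
  "sspace u Z = (\<lambda>w k. u k + w k) ` mono_span Z"

text \<open>u K[Z] is a Stanley space of the quotient whose monomial basis is M (= I \ J).\<close>
definition stanley_space :: "nat \<Rightarrow> nat set \<Rightarrow> mon set \<Rightarrow> mon \<Rightarrow> (nat \<times> bool) set \<Rightarrow> bool" where
  "stanley_space n A M u Z \<longleftrightarrow> valid_vars n A Z \<and> u \<in> monoms n A \<and> sspace u Z \<subseteq> M"

text \<open>Stanley decomposition indexed by a finite set P: the spans of the disjoint monomial sets
  sspace (u p) (Z p) form a direct sum equal to the span of M.\<close>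
definition stanley_decomp :: "nat \<Rightarrow> nat set \<Rightarrow> mon set \<Rightarrow> 'i set \<Rightarrow> ('i \<Rightarrow> mon)
    \<Rightarrow> ('i \<Rightarrow> (nat \<times> bool) set) \<Rightarrow> bool" where
  "stanley_decomp n A M P u Z \<longleftrightarrow> finite P
     \<and> (\<forall>p\<in>P. stanley_space n A M (u p) (Z p))
     \<and> (\<forall>p\<in>P. \<forall>q\<in>P. p \<noteq> q \<longrightarrow> sspace (u p) (Z p) \<inter> sspace (u q) (Z q) = {})
     \<and> (\<Union>p\<in>P. sspace (u p) (Z p)) = M"

definition sdepth_decomp :: "'i set \<Rightarrow> ('i \<Rightarrow> (nat \<times> bool) set) \<Rightarrow> enat" where
  "sdepth_decomp P Z = (INF p\<in>P. enat (card (Z p)))"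

definition sdepth :: "nat \<Rightarrow> nat set \<Rightarrow> mon set \<Rightarrow> enat" where
  "sdepth n A M = (SUP D\<in>{(P :: (nat \<times> nat set) set, u, Z). stanley_decomp n A M P u Z}.
      (case D of (P, u, Z) \<Rightarrow> sdepth_decomp P Z))"

end

theory Submission
  imports Defs
begin

text \<open>A monomial v of S_f lies in I_f exactly when v f^N \<in> I for all large N. So v is a monomial
  of I_f/J_f iff v f^N eventually lies in I \ J, i.e. in one of the spaces u_i K[Z_i]. For large N
  this happens iff Z_i contains every x_j with j \<in> A and v lies in u_i f_L^{-1} K[Z_i^L] for
  L = {j \<in> A. v_j < (u_i)_j}. Pieces with different i are disjoint because the u_i K[Z_i] are, and
  pieces with the same i because L is determined by v. As |Z_i^L| = |Z_i|, no sdepth is lost.\<close>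

definition mult_f_power :: "nat set \<Rightarrow> nat \<Rightarrow> mon \<Rightarrow> mon" where
  "mult_f_power A N v = (\<lambda>k. v k + (if k \<in> A then int N else 0))"

definition divide_fL :: "mon \<Rightarrow> nat set \<Rightarrow> mon" where
  "divide_fL u L = (\<lambda>k. u k - (if k \<in> L then 1 else 0))"

definition invert_vars :: "(nat \<times> bool) set \<Rightarrow> nat set \<Rightarrow> (nat \<times> bool) set" where
  "invert_vars Z L = {(l, False) | l. l \<in> L \<and> (l, True) \<in> Z} \<union> {(l, True) | l. l \<notin> L \<and> (l, True) \<in> Z}"

lemma mem_sspace_iff:
  assumes "\<forall>j. \<not> ((j, True) \<in> Z \<and> (j, False) \<in> Z)"
  shows "v \<in> sspace u Z \<longleftrightarrow>
    (\<forall>k. if (k, True) \<in> Z then u k \<le> v k else if (k, False) \<in> Z then v k \<le> u k else v k = u k)"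
    (is "_ \<longleftrightarrow> (\<forall>k. ?box k)")
proof
  assume "v \<in> sspace u Z"
  then show "\<forall>k. ?box k"
    using assms unfolding sspace_def mono_span_def by auto
next
  assume box: "\<forall>k. ?box k"
  define c where "c = (\<lambda>(k, b). if b then nat (v k - u k) else nat (u k - v k))"
  define w where "w = (\<lambda>k. (if (k, True) \<in> Z then int (c (k, True)) else 0)
      - (if (k, False) \<in> Z then int (c (k, False)) else 0))"
  have "v = (\<lambda>k. u k + w k)"
  proof
    fix k show "v k = u k + w k"
      using box[rule_format, of k] assms by (auto simp: c_def w_def)
  qed
  moreover have "w \<in> mono_span Z" unfolding mono_span_def w_def by blast
  ultimately show "v \<in> sspace u Z" unfolding sspace_def by blast
qed

lemma valid_vars_positive: "valid_vars n {} Z \<Longrightarrow> (k, b) \<in> Z \<Longrightarrow> b"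
  unfolding valid_vars_def by auto

lemma mem_sspace_positive_iff:
  assumes "valid_vars n {} Z"
  shows "v \<in> sspace u Z \<longleftrightarrow> (\<forall>k. if (k, True) \<in> Z then u k \<le> v k else v k = u k)"
  using valid_vars_positive[OF assms] by (subst mem_sspace_iff) auto

lemma mem_sspace_invert_vars_iff:
  assumes "valid_vars n {} Z" and "\<forall>l\<in>L. (l, True) \<in> Z"
  shows "v \<in> sspace (divide_fL u L) (invert_vars Z L) \<longleftrightarrow>
    (\<forall>k. if k \<in> L then v k < u k else if (k, True) \<in> Z then u k \<le> v k else v k = u k)"
proof -
  have "(k, True) \<in> invert_vars Z L \<longleftrightarrow> k \<notin> L \<and> (k, True) \<in> Z"
    and "(k, False) \<in> invert_vars Z L \<longleftrightarrow> k \<in> L" for k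
    using assms(2) unfolding invert_vars_def by auto
  then show ?thesis
    by (subst mem_sspace_iff) (auto simp: divide_fL_def)
qed

lemma card_invert_vars:
  assumes "valid_vars n {} Z"
  shows "card (invert_vars Z L) = card Z"
proof -
  have "invert_vars Z L = (\<lambda>(l, b). (l, l \<notin> L)) ` Z"
    using valid_vars_positive[OF assms] unfolding invert_vars_def by force
  moreover have "inj_on (\<lambda>(l, b). (l, l \<notin> L)) Z"
    using valid_vars_positive[OF assms] unfolding inj_on_def by auto
  ultimately show ?thesis by (simp add: card_image)
qed

lemma sspace_invert_vars_index:
  assumes "valid_vars n {} Z" and "v \<in> sspace (divide_fL u L) (invert_vars Z L)"
    and "\<forall>j\<in>A. (j, True) \<in> Z" and "L \<subseteq> A"
  shows "L = {j \<in> A. v j < u j}"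
proof (rule set_eqI)
  fix k
  have "\<forall>l\<in>L. (l, True) \<in> Z" using assms(3,4) by blast
  then have "if k \<in> L then v k < u k else if (k, True) \<in> Z then u k \<le> v k else v k = u k"
    using assms(2) mem_sspace_invert_vars_iff[OF assms(1)] by blast
  then show "k \<in> L \<longleftrightarrow> k \<in> {j \<in> A. v j < u j}"
    using assms(3,4) by (auto split: if_splits)
qed

lemma ex_sspace_invert_vars_iff:
  assumes "valid_vars n {} Z" and "\<forall>j\<in>A. (j, True) \<in> Z"
  shows "(\<exists>L\<subseteq>A. v \<in> sspace (divide_fL u L) (invert_vars Z L)) \<longleftrightarrow>
    (\<forall>k. k \<notin> A \<longrightarrow> (if (k, True) \<in> Z then u k \<le> v k else v k = u k))"
proof
  assume "\<exists>L\<subseteq>A. v \<in> sspace (divide_fL u L) (invert_vars Z L)"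
  then obtain L where "L \<subseteq> A" "v \<in> sspace (divide_fL u L) (invert_vars Z L)" by blast
  moreover have "\<forall>l\<in>L. (l, True) \<in> Z" using assms(2) \<open>L \<subseteq> A\<close> by blast
  ultimately have box: "\<forall>k. if k \<in> L then v k < u k else if (k, True) \<in> Z then u k \<le> v k else v k = u k"
    using mem_sspace_invert_vars_iff[OF assms(1)] by simp
  show "\<forall>k. k \<notin> A \<longrightarrow> (if (k, True) \<in> Z then u k \<le> v k else v k = u k)"
  proof (intro allI impI)
    fix k assume "k \<notin> A"
    with \<open>L \<subseteq> A\<close> have "k \<notin> L" by blast
    then show "if (k, True) \<in> Z then u k \<le> v k else v k = u k"
      using box[rule_format, of k] by simp
  qed
next
  assume outside: "\<forall>k. k \<notin> A \<longrightarrow> (if (k, True) \<in> Z then u k \<le> v k else v k = u k)"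
  define L where "L = {j \<in> A. v j < u j}"
  have inL: "\<forall>l\<in>L. (l, True) \<in> Z" using assms(2) by (auto simp: L_def)
  have box: "if k \<in> L then v k < u k else if (k, True) \<in> Z then u k \<le> v k else v k = u k" for k
  proof (cases "k \<in> A")
    case True
    then show ?thesis using assms(2) by (auto simp: L_def)
  next
    case False
    then show ?thesis using outside by (simp add: L_def)
  qed
  have "v \<in> sspace (divide_fL u L) (invert_vars Z L)"
    using box by (intro mem_sspace_invert_vars_iff[OF assms(1) inL, THEN iffD2] allI)
  moreover have "L \<subseteq> A" by (simp add: L_def)
  ultimately show "\<exists>L\<subseteq>A. v \<in> sspace (divide_fL u L) (invert_vars Z L)"
    by blast
qed

lemma eventually_ball_less_int:
  assumes "finite A"
  shows "\<forall>\<^sub>F N in sequentially. \<forall>k\<in>A. f k < int N"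
proof (intro eventually_ball_finite[OF assms] ballI)
  fix k
  show "\<forall>\<^sub>F N in sequentially. f k < int N"
    by (rule eventually_sequentiallyI[of "nat (f k + 1)"]) linarith
qed

lemma eventually_mult_f_power_mem_sspace_iff:
  assumes "finite A" and "valid_vars n {} Z"
  shows "\<forall>\<^sub>F N in sequentially. (mult_f_power A N v \<in> sspace u Z \<longleftrightarrow>
    (\<forall>j\<in>A. (j, True) \<in> Z) \<and> (\<exists>L\<subseteq>A. v \<in> sspace (divide_fL u L) (invert_vars Z L)))"
  using eventually_ball_less_int[OF assms(1), of "\<lambda>k. u k - v k"]
proof eventually_elim
  case (elim N)
  show ?case
  proof (cases "\<forall>j\<in>A. (j, True) \<in> Z")
    case True
    have "(if (k, True) \<in> Z then u k \<le> mult_f_power A N v k else mult_f_power A N v k = u k)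
      \<longleftrightarrow> (k \<notin> A \<longrightarrow> (if (k, True) \<in> Z then u k \<le> v k else v k = u k))" for k
      using True elim by (cases "k \<in> A") (auto simp: mult_f_power_def)
    then show ?thesis
      using True by (simp add: mem_sspace_positive_iff[OF assms(2)] ex_sspace_invert_vars_iff[OF assms(2)])
  next
    case False
    then obtain j where "j \<in> A" "(j, True) \<notin> Z" by blast
    then have "mult_f_power A N v j \<noteq> u j" using elim by (auto simp: mult_f_power_def)
    then show ?thesis
      using False \<open>(j, True) \<notin> Z\<close> by (auto simp: mem_sspace_positive_iff[OF assms(2)])
  qed
qed

lemma mono_idealD:
  "mono_ideal n A I \<Longrightarrow> a \<in> I \<Longrightarrow> b \<in> monoms n A \<Longrightarrow> (\<lambda>k. a k + b k) \<in> I"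
  unfolding mono_ideal_def by blast

lemma mem_loc_if_mult_f_power_mem:
  assumes "A \<subseteq> {..<n}" and "mult_f_power A N v \<in> I"
  shows "v \<in> loc n A I"
proof -
  have "(\<lambda>k. if k \<in> A then - int N else 0) \<in> monoms n A"
    using assms(1) unfolding monoms_def by auto
  moreover have "v = (\<lambda>k. mult_f_power A N v k + (if k \<in> A then - int N else 0))"
    by (auto simp: mult_f_power_def)
  ultimately show ?thesis
    using assms(2) unfolding loc_def by (intro CollectI bexI)
qed

lemma eventually_mult_f_power_mem:
  assumes "A \<subseteq> {..<n}" and "mono_ideal n {} I" and "v \<in> loc n A I"
  shows "\<forall>\<^sub>F N in sequentially. mult_f_power A N v \<in> I"
proof -
  obtain m w where m: "m \<in> I" and w: "w \<in> monoms n A" and v: "v = (\<lambda>k. m k + w k)"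
    using assms(3) unfolding loc_def by blast
  have "finite A" using assms(1) finite_subset by blast
  from eventually_ball_less_int[OF this, of "\<lambda>k. - w k"]
  show ?thesis
  proof eventually_elim
    case (elim N)
    then have "(\<lambda>k. w k + (if k \<in> A then int N else 0)) \<in> monoms n {}"
      using w assms(1) unfolding monoms_def by auto
    with m have "(\<lambda>k. m k + (w k + (if k \<in> A then int N else 0))) \<in> I"
      by (rule mono_idealD[OF assms(2)])
    then show ?case by (simp add: v mult_f_power_def add.assoc)
  qed
qed

lemma mem_loc_diff_iff:
  assumes "A \<subseteq> {..<n}" and "mono_ideal n {} I" and "mono_ideal n {} J"
  shows "v \<in> loc n A I - loc n A J \<longleftrightarrow> (\<forall>\<^sub>F N in sequentially. mult_f_power A N v \<in> I - J)"
proof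
  assume v: "v \<in> loc n A I - loc n A J"
  then have "\<forall>\<^sub>F N in sequentially. mult_f_power A N v \<in> I"
    using eventually_mult_f_power_mem[OF assms(1,2)] by blast
  moreover have "mult_f_power A N v \<notin> J" for N
    using v mem_loc_if_mult_f_power_mem[OF assms(1)] by blast
  ultimately show "\<forall>\<^sub>F N in sequentially. mult_f_power A N v \<in> I - J"
    by (auto elim: eventually_mono)
next
  assume ev: "\<forall>\<^sub>F N in sequentially. mult_f_power A N v \<in> I - J"
  then obtain N where "mult_f_power A N v \<in> I"
    using eventually_happens'[OF sequentially_bot] by blast
  then have "v \<in> loc n A I" using mem_loc_if_mult_f_power_mem[OF assms(1)] by blast
  moreover have "v \<notin> loc n A J"
  proof
    assume "v \<in> loc n A J"
    then have "\<forall>\<^sub>F N in sequentially. mult_f_power A N v \<in> J"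
      by (rule eventually_mult_f_power_mem[OF assms(1,3)])
    with ev have "\<forall>\<^sub>F N in sequentially. False"
      by eventually_elim blast
    then show False by simp
  qed
  ultimately show "v \<in> loc n A I - loc n A J" by blast
qed

lemma eventually_mult_f_power_mem_sspace:
  assumes "finite A" and "valid_vars n {} Z" and "\<forall>j\<in>A. (j, True) \<in> Z" and "L \<subseteq> A"
    and "v \<in> sspace (divide_fL u L) (invert_vars Z L)"
  shows "\<forall>\<^sub>F N in sequentially. mult_f_power A N v \<in> sspace u Z"
proof -
  have "(\<forall>j\<in>A. (j, True) \<in> Z) \<and> (\<exists>L\<subseteq>A. v \<in> sspace (divide_fL u L) (invert_vars Z L))"
    using assms(3-5) by blast
  with eventually_mult_f_power_mem_sspace_iff[OF assms(1,2), of v u] show ?thesis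
    by simp
qed

lemma stanley_space_localization:
  assumes A: "A \<subseteq> {..<n}" and I: "mono_ideal n {} I" and J: "mono_ideal n {} J"
    and S: "stanley_space n {} (I - J) u Z" and "\<forall>j\<in>A. (j, True) \<in> Z" and "L \<subseteq> A"
  shows "stanley_space n A (loc n A I - loc n A J) (divide_fL u L) (invert_vars Z L)"
  unfolding stanley_space_def
proof (intro conjI subsetI)
  have valid: "valid_vars n {} Z" and "u \<in> monoms n {}" and sub: "sspace u Z \<subseteq> I - J"
    using S unfolding stanley_space_def by blast+
  show "valid_vars n A (invert_vars Z L)"
    using valid \<open>L \<subseteq> A\<close> unfolding valid_vars_def invert_vars_def by auto
  show "divide_fL u L \<in> monoms n A"
    using \<open>u \<in> monoms n {}\<close> \<open>L \<subseteq> A\<close> A unfolding monoms_def divide_fL_def by auto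
  fix v assume "v \<in> sspace (divide_fL u L) (invert_vars Z L)"
  with A have "\<forall>\<^sub>F N in sequentially. mult_f_power A N v \<in> sspace u Z"
    using eventually_mult_f_power_mem_sspace[OF _ valid assms(5,6)] finite_subset by blast
  then have "\<forall>\<^sub>F N in sequentially. mult_f_power A N v \<in> I - J"
    by eventually_elim (use sub in blast)
  then show "v \<in> loc n A I - loc n A J"
    using mem_loc_diff_iff[OF A I J] by blast
qed

lemma sspace_invert_vars_disjoint:
  assumes "valid_vars n {} Z" and "\<forall>j\<in>A. (j, True) \<in> Z" and "L \<subseteq> A" and "L' \<subseteq> A" and "L \<noteq> L'"
  shows "sspace (divide_fL u L) (invert_vars Z L) \<inter> sspace (divide_fL u L') (invert_vars Z L') = {}"
proof (rule equals0I)
  fix v assume v: "v \<in> sspace (divide_fL u L) (invert_vars Z L) \<inter> sspace (divide_fL u L') (invert_vars Z L')"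
  have "L = {j \<in> A. v j < u j}" and "L' = {j \<in> A. v j < u j}"
    using v assms(2-4) sspace_invert_vars_index[OF assms(1)] by blast+
  with \<open>L \<noteq> L'\<close> show False by simp
qed

lemma sspace_localization_disjoint:
  assumes "finite A" and "valid_vars n {} Z" and "valid_vars n {} Z'"
    and "\<forall>j\<in>A. (j, True) \<in> Z" and "\<forall>j\<in>A. (j, True) \<in> Z'" and "L \<subseteq> A" and "L' \<subseteq> A"
    and disj: "sspace u Z \<inter> sspace u' Z' = {}"
  shows "sspace (divide_fL u L) (invert_vars Z L) \<inter> sspace (divide_fL u' L') (invert_vars Z' L') = {}"
proof (rule equals0I)
  fix v assume v: "v \<in> sspace (divide_fL u L) (invert_vars Z L) \<inter> sspace (divide_fL u' L') (invert_vars Z' L')"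
  have "\<forall>\<^sub>F N in sequentially. mult_f_power A N v \<in> sspace u Z"
    using v by (intro eventually_mult_f_power_mem_sspace[OF assms(1,2,4,6)]) blast
  moreover have "\<forall>\<^sub>F N in sequentially. mult_f_power A N v \<in> sspace u' Z'"
    using v by (intro eventually_mult_f_power_mem_sspace[OF assms(1,3,5,7)]) blast
  ultimately have "\<forall>\<^sub>F N in sequentially. False"
    by eventually_elim (use disj in blast)
  then show False by simp
qed

lemma loc_diff_subset_localization:
  fixes P :: "'i set" and u :: "'i \<Rightarrow> mon" and Z :: "'i \<Rightarrow> (nat \<times> bool) set"
  assumes A: "A \<subseteq> {..<n}" and I: "mono_ideal n {} I" and J: "mono_ideal n {} J"
    and D: "stanley_decomp n {} (I - J) P u Z" and v: "v \<in> loc n A I - loc n A J"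
  shows "\<exists>i\<in>P. (\<forall>j\<in>A. (j, True) \<in> Z i) \<and> (\<exists>L\<subseteq>A. v \<in> sspace (divide_fL (u i) L) (invert_vars (Z i) L))"
proof -
  have "finite A" using A finite_subset by blast
  have "finite P" and valid: "\<forall>i\<in>P. valid_vars n {} (Z i)"
    and cover: "(\<Union>i\<in>P. sspace (u i) (Z i)) = I - J"
    using D unfolding stanley_decomp_def stanley_space_def by blast+
  have "\<forall>\<^sub>F N in sequentially. mult_f_power A N v \<in> (\<Union>i\<in>P. sspace (u i) (Z i))"
    using v unfolding cover mem_loc_diff_iff[OF A I J] .
  moreover have "\<forall>\<^sub>F N in sequentially. \<forall>i\<in>P. (mult_f_power A N v \<in> sspace (u i) (Z i) \<longleftrightarrow>
      (\<forall>j\<in>A. (j, True) \<in> Z i) \<and> (\<exists>L\<subseteq>A. v \<in> sspace (divide_fL (u i) L) (invert_vars (Z i) L)))"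
    using \<open>finite P\<close>
    by (intro eventually_ball_finite ballI eventually_mult_f_power_mem_sspace_iff[OF \<open>finite A\<close> valid[rule_format]])
  ultimately have "\<forall>\<^sub>F N in sequentially. \<exists>i\<in>P. (\<forall>j\<in>A. (j, True) \<in> Z i)
      \<and> (\<exists>L\<subseteq>A. v \<in> sspace (divide_fL (u i) L) (invert_vars (Z i) L))"
  proof eventually_elim
    case (elim N)
    then obtain i where i: "i \<in> P" and "mult_f_power A N v \<in> sspace (u i) (Z i)" by blast
    with elim(2)[rule_format, OF i] show ?case by (intro bexI[OF _ i]) simp
  qed
  then show ?thesis by simp
qed

lemma stanley_decomp_localization:
  fixes P :: "'i set" and u :: "'i \<Rightarrow> mon" and Z :: "'i \<Rightarrow> (nat \<times> bool) set"
  assumes A: "A \<subseteq> {..<n}" and I: "mono_ideal n {} I" and J: "mono_ideal n {} J"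
    and D: "stanley_decomp n {} (I - J) P u Z"
  shows "stanley_decomp n A (loc n A I - loc n A J)
    {(i, L). i \<in> P \<and> (\<forall>j\<in>A. (j, True) \<in> Z i) \<and> L \<subseteq> A}
    (\<lambda>(i, L). divide_fL (u i) L) (\<lambda>(i, L). invert_vars (Z i) L)"
    (is "stanley_decomp _ _ ?M ?Q ?u ?Z")
  unfolding stanley_decomp_def
proof (intro conjI ballI impI)
  have "finite A" using A finite_subset by blast
  have "finite P" and space: "\<And>i. i \<in> P \<Longrightarrow> stanley_space n {} (I - J) (u i) (Z i)"
    and disj: "\<And>i i'. i \<in> P \<Longrightarrow> i' \<in> P \<Longrightarrow> i \<noteq> i' \<Longrightarrow> sspace (u i) (Z i) \<inter> sspace (u i') (Z i') = {}"
    using D unfolding stanley_decomp_def by blast+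
  have valid: "valid_vars n {} (Z i)" if "i \<in> P" for i
    using space[OF that] unfolding stanley_space_def by blast
  have "?Q \<subseteq> P \<times> Pow A" by auto
  then show "finite ?Q"
    by (rule finite_subset) (simp add: \<open>finite P\<close> \<open>finite A\<close>)
  show space_Q: "stanley_space n A ?M (?u q) (?Z q)" if "q \<in> ?Q" for q
    using that by (cases q) (auto intro: stanley_space_localization[OF A I J space])
  show "sspace (?u q) (?Z q) \<inter> sspace (?u q') (?Z q') = {}"
    if "q \<in> ?Q" and "q' \<in> ?Q" and "q \<noteq> q'" for q q'
  proof -
    obtain i L i' L' where q: "q = (i, L)" and q': "q' = (i', L')" by fastforce
    have i: "i \<in> P" "\<forall>j\<in>A. (j, True) \<in> Z i" "L \<subseteq> A"
      and i': "i' \<in> P" "\<forall>j\<in>A. (j, True) \<in> Z i'" "L' \<subseteq> A"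
      using that unfolding q q' by auto
    show ?thesis
    proof (cases "i = i'")
      case True
      with that have "L \<noteq> L'" unfolding q q' by simp
      with i i'(3) have "sspace (divide_fL (u i) L) (invert_vars (Z i) L)
          \<inter> sspace (divide_fL (u i) L') (invert_vars (Z i) L') = {}"
        by (intro sspace_invert_vars_disjoint[OF valid])
      then show ?thesis unfolding q q' True by simp
    next
      case False
      show ?thesis
        using sspace_localization_disjoint[OF \<open>finite A\<close> valid valid i(2) i'(2) i(3) i'(3) disj[OF i(1) i'(1) False]]
          i(1) i'(1) unfolding q q' by simp
    qed
  qed
  show "(\<Union>q\<in>?Q. sspace (?u q) (?Z q)) = ?M"
  proof
    show "(\<Union>q\<in>?Q. sspace (?u q) (?Z q)) \<subseteq> ?M"
      using space_Q unfolding stanley_space_def by blast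
    show "?M \<subseteq> (\<Union>q\<in>?Q. sspace (?u q) (?Z q))"
    proof
      fix v assume "v \<in> ?M"
      then obtain i L where "i \<in> P" "\<forall>j\<in>A. (j, True) \<in> Z i" "L \<subseteq> A"
        and "v \<in> sspace (divide_fL (u i) L) (invert_vars (Z i) L)"
        using loc_diff_subset_localization[OF A I J D] by blast
      then show "v \<in> (\<Union>q\<in>?Q. sspace (?u q) (?Z q))"
        by (intro UN_I[of "(i, L)"]) simp_all
    qed
  qed
qed

lemma stanley_decomp_reindex:
  assumes f: "bij_betw f Q P" and D: "stanley_decomp n A M P u Z"
  shows "stanley_decomp n A M Q (u \<circ> f) (Z \<circ> f)"
  unfolding stanley_decomp_def
proof (intro conjI ballI impI)
  have inj: "inj_on f Q" and im: "f ` Q = P" using f unfolding bij_betw_def by auto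
  show "finite Q" using D im inj finite_imageD unfolding stanley_decomp_def by blast
  show "stanley_space n A M ((u \<circ> f) q) ((Z \<circ> f) q)" if "q \<in> Q" for q
    using D im that unfolding stanley_decomp_def by auto
  show "sspace ((u \<circ> f) q) ((Z \<circ> f) q) \<inter> sspace ((u \<circ> f) q') ((Z \<circ> f) q') = {}"
    if "q \<in> Q" "q' \<in> Q" "q \<noteq> q'" for q q'
  proof -
    have "f q \<noteq> f q'" using inj that unfolding inj_on_def by blast
    then show ?thesis using D im that unfolding stanley_decomp_def by auto
  qed
  have "(\<Union>q\<in>Q. sspace ((u \<circ> f) q) ((Z \<circ> f) q)) = (\<Union>p\<in>f ` Q. sspace (u p) (Z p))" by simp
  then show "(\<Union>q\<in>Q. sspace ((u \<circ> f) q) ((Z \<circ> f) q)) = M"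
    using D im unfolding stanley_decomp_def by simp
qed

lemma sdepth_decomp_reindex:
  assumes "bij_betw f Q P"
  shows "sdepth_decomp Q (Z \<circ> f) = sdepth_decomp P Z"
proof -
  have "f ` Q = P" using assms unfolding bij_betw_def by blast
  then show ?thesis unfolding sdepth_decomp_def by (simp add: image_image flip: \<open>f ` Q = P\<close>)
qed

text \<open>sdepth only ranges over decompositions indexed by subsets of nat \<times> nat set, so a
  decomposition with an arbitrary finite index set is first transported there.\<close>

lemma sdepth_decomp_le_sdepth:
  fixes P :: "'i set"
  assumes D: "stanley_decomp n A M P u Z"
  shows "sdepth_decomp P Z \<le> sdepth n A M"
proof -
  have "finite P" using D unfolding stanley_decomp_def by blast
  then obtain h where h: "bij_betw h {0..<card P} P"
    using ex_bij_betw_nat_finite by blast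
  define Q :: "(nat \<times> nat set) set" where "Q = {0..<card P} \<times> {{}}"
  have "bij_betw fst Q {0..<card P}"
    unfolding Q_def bij_betw_def inj_on_def by auto
  then have g: "bij_betw (h \<circ> fst) Q P"
    using h by (rule bij_betw_trans)
  then have "stanley_decomp n A M Q (u \<circ> (h \<circ> fst)) (Z \<circ> (h \<circ> fst))"
    using D by (rule stanley_decomp_reindex)
  then have "sdepth_decomp Q (Z \<circ> (h \<circ> fst)) \<le> sdepth n A M"
    unfolding sdepth_def by (force intro: SUP_upper2)
  then show ?thesis
    unfolding sdepth_decomp_reindex[OF g] .
qed

lemma sdepth_decomp_localization:
  assumes "\<forall>i\<in>P. valid_vars n {} (Z i)"
  shows "sdepth_decomp P Z \<le> sdepth_decomp {(i, L). i \<in> P \<and> (\<forall>j\<in>A. (j, True) \<in> Z i) \<and> L \<subseteq> A}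
    (\<lambda>(i, L). invert_vars (Z i) L)"
  unfolding sdepth_decomp_def
proof (rule INF_greatest)
  fix q assume "q \<in> {(i, L). i \<in> P \<and> (\<forall>j\<in>A. (j, True) \<in> Z i) \<and> L \<subseteq> A}"
  then obtain i L where q: "q = (i, L)" and "i \<in> P" by blast
  then have "card ((\<lambda>(i, L). invert_vars (Z i) L) q) = card (Z i)"
    using assms \<open>i \<in> P\<close> card_invert_vars[of n] by simp
  moreover have "(INF p\<in>P. enat (card (Z p))) \<le> enat (card (Z i))"
    using \<open>i \<in> P\<close> by (rule INF_lower)
  ultimately show "(INF p\<in>P. enat (card (Z p))) \<le> enat (card ((\<lambda>(i, L). invert_vars (Z i) L) q))"
    by simp
qed

lemma sdepth_le_sdepth_localization:
  assumes A: "A \<subseteq> {..<n}" and I: "mono_ideal n {} I" and J: "mono_ideal n {} J"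
  shows "sdepth n {} (I - J) \<le> sdepth n A (loc n A I - loc n A J)"
  unfolding sdepth_def[of n "{}"]
proof (rule SUP_least, clarify)
  fix P :: "(nat \<times> nat set) set" and u Z
  assume D: "stanley_decomp n {} (I - J) P u Z"
  then have "\<forall>i\<in>P. valid_vars n {} (Z i)"
    unfolding stanley_decomp_def stanley_space_def by blast
  then have "sdepth_decomp P Z \<le> sdepth_decomp {(i, L). i \<in> P \<and> (\<forall>j\<in>A. (j, True) \<in> Z i) \<and> L \<subseteq> A}
      (\<lambda>(i, L). invert_vars (Z i) L)"
    by (rule sdepth_decomp_localization)
  also have "\<dots> \<le> sdepth n A (loc n A I - loc n A J)"
    using stanley_decomp_localization[OF A I J D] by (rule sdepth_decomp_le_sdepth)
  finally show "sdepth_decomp P Z \<le> sdepth n A (loc n A I - loc n A J)" .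
qed

theorem theorem3p1:
  fixes n r :: nat and A :: "nat set" and I J :: "mon set"
    and u :: "nat \<Rightarrow> mon" and Z :: "nat \<Rightarrow> (nat \<times> bool) set"
  assumes "A \<subseteq> {..<n}"
    and "mono_ideal n {} I" and "mono_ideal n {} J" and "J \<subset> I"
    and "stanley_decomp n {} (I - J) {..<r} u Z"
  shows "(stanley_decomp n A (loc n A I - loc n A J)
           {(i, L). i < r \<and> (\<forall>j\<in>A. (j, True) \<in> Z i) \<and> L \<subseteq> A}
           (\<lambda>(i, L). (\<lambda>k. u i k - (if k \<in> L then 1 else 0)))
           (\<lambda>(i, L). {(l, False) | l. l \<in> L \<and> (l, True) \<in> Z i}
                   \<union> {(l, True) | l. l \<notin> L \<and> (l, True) \<in> Z i}))
    \<and> sdepth n {} (I - J) \<le> sdepth n A (loc n A I - loc n A J)"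
  using stanley_decomp_localization[OF assms(1-3,5)] sdepth_le_sdepth_localization[OF assms(1-3)]
  by (simp add: divide_fL_def invert_vars_def)

end
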